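(* Let $n\ge1$ and let $c\in\mathfrak{S}_{n+1}$ be a Coxeter element. For every $\boldsymbol\pi\in\mathcal{ST}(c)$, we have $\mathrm{rev}_n(\boldsymbol\pi)\in\mathcal{ST}(\mathrm{rev}_{n+1}(c))$.
   Context: Coxeter element of $\mathfrak{S}_{n+1}$: product of $s_1,\dots,s_n$ ($s_i=(i,i+1)$), each exactly once; it is a long cycle $(c_1=1<c_2<\dots<c_m=n+1>c_{m+1}>\dots>c_{n+1})$, with $\mathbf L_c=\{c_2,\dots,c_{m-1}\}$, $\mathbf R_c=\{c_{m+1},\dots,c_{n+1}\}$. $\mathrm{rev}_{n+1}(c)=wcw^{-1}$ where $w\in\mathfrak{S}_{n+1}$, $w(i)=n+2-i$. For an $n$-tuple of partitions $\boldsymbol\pi=(\pi^1,\dots,\pi^n)$, $\mathrm{rev}_n(\boldsymbol\pi)=(\pi^n,\pi^{n-1},\dots,\pi^1)$. Storability: partitions are weakly decreasing sequences of nonnegative integers with finitely many nonzero terms. A pair $(\lambda,\mu)$ is storable if $\lambda_i\ge\mu_i\ge\lambda_{i+1}$ for all $i\ge1$. A triple $(\lambda,\mu,\nu)$ is $(\boxplus,\boxplus)$-storable if $(\lambda,\mu)$ and $(\nu,\mu)$ are storable; $(\boxplus,\boxminus)$-storable if $(\lambda,\mu)$ and $(\mu,\nu)$ are; $(\boxminus,\boxplus)$-storable if $(\mu,\lambda)$ and $(\nu,\mu)$ are; $(\boxminus,\boxminus)$-storable if $(\mu,\lambda)$ and $(\mu,\nu)$ are. For $\boldsymbol\pi=(\pi^1,\dots,\pi^n)$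 set $\pi^0=\pi^{n+1}=(0)$; $\boldsymbol\pi$ is $X$-storable at $i$ if $(\pi^{i-1},\pi^i,\pi^{i+1})$ is $X$-storable. For $\mathbf A\subset\mathbb{Z}$, $\mathbf A[-1]=\{a-1:a\in\mathbf A\}$. With $\mathbf L=\mathbf L_c\cup\{1\}$, $\mathbf R=\mathbf R_c\cup\{n+1\}$, $\boldsymbol\pi$ is $c$-storable ($\boldsymbol\pi\in\mathcal{ST}(c)$) if for every $i\in\{1,\dots,n\}$: it is $(\boxplus,\boxplus)$-storable at $i$ if $i\notin\mathbf L\cup\mathbf R[-1]$; $(\boxplus,\boxminus)$-storable at $i$ if $i\in\mathbf R[-1]\setminus\mathbf L$; $(\boxminus,\boxplus)$-storable at $i$ if $i\in\mathbf L\setminus\mathbf R[-1]$; $(\boxminus,\boxminus)$-storable at $i$ if $i\in\mathbf L\cap\mathbf R[-1]$; and $\pi^k=(0)$ for $k\notin\{\min\mathbf L,\dots,\max\mathbf R\}$. *)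

theory Defs
  imports Main
begin

definition stransp :: "nat \<Rightarrow> nat \<Rightarrow> nat" where
  "stransp i = (\<lambda>x. if x = i then Suc i else if x = Suc i then i else x)"

(* Coxeter element of S_{n+1} (permutations of {1..n+1}, identity elsewhere):
   a product of s_1,...,s_n, each exactly once, in some order. *)
definition coxeter :: "nat \<Rightarrow> (nat \<Rightarrow> nat) \<Rightarrow> bool" where
  "coxeter n c \<longleftrightarrow> (\<exists>xs. distinct xs \<and> set xs = {1..n} \<and>
      c = foldr (\<lambda>i f. stransp i \<circ> f) xs id)"

(* position m of n+1 in the cycle (c_1 = 1, c_2 = c 1, ...): c_{m} = c^{m-1}(1) = n+1 *)
definition cyc_pos :: "nat \<Rightarrow> (nat \<Rightarrow> nat) \<Rightarrow> nat" where
  "cyc_pos n c = (LEAST k. (c ^^ k) 1 = n + 1)"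

(* L_c = {c_2,...,c_{m-1}}, with c_j = c^{j-1}(1) *)
definition Lc :: "nat \<Rightarrow> (nat \<Rightarrow> nat) \<Rightarrow> nat set" where
  "Lc n c = {(c ^^ k) 1 | k. 0 < k \<and> k < cyc_pos n c}"

(* R_c = {c_{m+1},...,c_{n+1}} *)
definition Rc :: "nat \<Rightarrow> (nat \<Rightarrow> nat) \<Rightarrow> nat set" where
  "Rc n c = {(c ^^ k) 1 | k. cyc_pos n c < k \<and> k \<le> n}"

definition w0 :: "nat \<Rightarrow> nat \<Rightarrow> nat" where
  "w0 n = (\<lambda>i. if i \<in> {1..n+1} then n + 2 - i else i)"

definition rev_cox :: "nat \<Rightarrow> (nat \<Rightarrow> nat) \<Rightarrow> (nat \<Rightarrow> nat)" where
  "rev_cox n c = w0 n \<circ> c \<circ> inv (w0 n)"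

(* Partitions: lambda i is the (i+1)-th part (0-based indexing) *)
definition is_partition :: "(nat \<Rightarrow> nat) \<Rightarrow> bool" where
  "is_partition p \<longleftrightarrow> antimono p \<and> finite {i. p i \<noteq> 0}"

definition storable :: "(nat \<Rightarrow> nat) \<Rightarrow> (nat \<Rightarrow> nat) \<Rightarrow> bool" where
  "storable la mu \<longleftrightarrow> (\<forall>i. la i \<ge> mu i \<and> mu i \<ge> la (Suc i))"

definition st_pp where "st_pp la mu nu \<longleftrightarrow> storable la mu \<and> storable nu mu"
definition st_pm where "st_pm la mu nu \<longleftrightarrow> storable la mu \<and> storable mu nu"
definition st_mp where "st_mp la mu nu \<longleftrightarrow> storable mu la \<and> storable nu mu"
definition st_mm where "st_mm la mu nu \<longleftrightarrow> storable mu la \<and> storable mu nu"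

(* an n-tuple of partitions is a function k \<mapsto> pi^k, used for k \<in> {1..n};
   ext_tuple sets pi^0 = pi^{n+1} = (0) (and all other indices) *)
definition ext_tuple :: "nat \<Rightarrow> (nat \<Rightarrow> nat \<Rightarrow> nat) \<Rightarrow> nat \<Rightarrow> nat \<Rightarrow> nat" where
  "ext_tuple n pi k = (if k \<in> {1..n} then pi k else (\<lambda>_. 0))"

definition rev_tuple :: "nat \<Rightarrow> (nat \<Rightarrow> nat \<Rightarrow> nat) \<Rightarrow> nat \<Rightarrow> nat \<Rightarrow> nat" where
  "rev_tuple n pi = (\<lambda>k. pi (n + 1 - k))"

definition shift_down :: "nat set \<Rightarrow> nat set" where
  "shift_down A = (\<lambda>a. a - 1) ` A"   (* only applied to sets of positive naturals *)

definition c_storable :: "nat \<Rightarrow> (nat \<Rightarrow> nat) \<Rightarrow> (nat \<Rightarrow> nat \<Rightarrow> nat) \<Rightarrow> bool" where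
  "c_storable n c pi \<longleftrightarrow>
    (let L = Lc n c \<union> {1}; R = Rc n c \<union> {n + 1}; P = ext_tuple n pi;
         tr = (\<lambda>i. (P (i - 1), P i, P (Suc i))) in
     (\<forall>i\<in>{1..n}. is_partition (pi i)) \<and>
     (\<forall>i\<in>{1..n}.
        (i \<notin> L \<union> shift_down R \<longrightarrow> case_prod (\<lambda>a. case_prod (st_pp a)) (tr i)) \<and>
        (i \<in> shift_down R - L \<longrightarrow> case_prod (\<lambda>a. case_prod (st_pm a)) (tr i)) \<and>
        (i \<in> L - shift_down R \<longrightarrow> case_prod (\<lambda>a. case_prod (st_mp a)) (tr i)) \<and>
        (i \<in> L \<inter> shift_down R \<longrightarrow> case_prod (\<lambda>a. case_prod (st_mm a)) (tr i))) \<and>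
     (\<forall>k\<in>{1..n}. k \<notin> {Min L..Max R} \<longrightarrow> pi k = (\<lambda>_. 0)))"

end

(* A Coxeter element c of S_(n+1) is a single cycle (1, L_c, n+1, R_c) through {1..n+1}: inserting
   s_i into a word for a long cycle amounts to conjugating and multiplying by a transposition that
   extends the cycle.  Conjugating by the longest element w turns this cycle into
   (n+1, w L_c, 1, w R_c) = (1, w R_c, n+1, w L_c), so the bold L and R of rev(c) are the
   w-images of the bold R and L of c.  Hence i lies in L' (resp. R'[-1]) iff n+1-i lies in R[-1]
   (resp. L); and since reversing the tuple reverses each triple, while reversing a triple
   exchanges the two signs of the storability condition, position i of rev(pi) satisfies exactly
   the condition of position n+1-i of pi. *)

theory Submission
  imports Defs "HOL-Combinatorics.Cycles"
begin

definition long_cycle :: "'a set \<Rightarrow> ('a \<Rightarrow> 'a) \<Rightarrow> bool" where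
  "long_cycle S c \<longleftrightarrow> (\<exists>cs. distinct cs \<and> set cs = S \<and> c = cycle_of_list cs)"

lemma long_cycle_starting_at:
  assumes "long_cycle S c" and "a \<in> S"
  obtains cs where "distinct (a # cs)" "set (a # cs) = S" "c = cycle_of_list (a # cs)"
proof -
  obtain ds where ds: "distinct ds" "set ds = S" "c = cycle_of_list ds"
    using assms(1) unfolding long_cycle_def by blast
  then obtain u v where uv: "ds = u @ a # v"
    using assms(2) by (meson split_list)
  have "rotate (length u) ds = a # v @ u"
    using uv by (simp add: rotate_append)
  moreover have "cycle_of_list ds = cycle_of_list (rotate (length u) ds)"
    using cycle_of_list_rotate_independent[OF ds(1)] .
  ultimately show thesis
    using ds by (intro that[of "v @ u"]) (metis distinct_rotate, metis set_rotate, simp)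
qed

lemma long_cycle_conj:
  assumes "long_cycle S c" and "bij g"
  shows "long_cycle (g ` S) (g \<circ> c \<circ> inv g)"
proof -
  obtain cs where "distinct cs" "set cs = S" "c = cycle_of_list cs"
    using assms(1) unfolding long_cycle_def by blast
  then show ?thesis
    using assms(2) conjugation_of_cycle[of cs g] unfolding long_cycle_def
    by (intro exI[of _ "map g cs"]) (auto simp: distinct_map intro: inj_on_subset[OF bij_is_inj])
qed

lemma long_cycle_transpose_insert:
  assumes "long_cycle S c" and "a \<in> S" and "b \<notin> S"
  shows "long_cycle (insert b S) (transpose a b \<circ> c)"
proof -
  obtain cs where cs: "distinct (a # cs)" "set (a # cs) = S" "c = cycle_of_list (a # cs)"
    using long_cycle_starting_at[OF assms(1,2)] by blast
  have "transpose a b \<circ> c = cycle_of_list (b # a # cs)"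
    using cs(3) by (simp add: transpose_commute)
  then show ?thesis
    unfolding long_cycle_def using cs(1,2) assms(3)
    by (intro exI[of _ "b # a # cs"]) auto
qed

abbreviation stransp_prod :: "nat list \<Rightarrow> nat \<Rightarrow> nat" where
  "stransp_prod xs \<equiv> foldr (\<lambda>i f. stransp i \<circ> f) xs id"

lemma stransp_eq_transpose: "stransp i = transpose i (Suc i)"
  by (auto simp: fun_eq_iff stransp_def transpose_def)

lemma stransp_prod_append: "stransp_prod (xs @ ys) = stransp_prod xs \<circ> stransp_prod ys"
  by (induct xs) auto

lemma stransp_prod_permutes:
  assumes "set xs \<subseteq> {1..n}"
  shows "stransp_prod xs permutes {1..n+1}"
  using assms
proof (induct xs)
  case Nil
  then show ?case by (auto simp: permutes_def)
next
  case (Cons i xs)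
  then have "stransp i permutes {1..n+1}"
    unfolding stransp_eq_transpose by (intro permutes_swap_id) auto
  moreover have "stransp_prod xs permutes {1..n+1}"
    using Cons.prems by (intro Cons.hyps) simp
  ultimately have "stransp i \<circ> stransp_prod xs permutes {1..n+1}"
    by (rule permutes_compose[rotated])
  moreover have "stransp_prod (i # xs) = stransp i \<circ> stransp_prod xs"
    by simp
  ultimately show ?case
    by metis
qed

lemma stransp_prod_long_cycle:
  assumes "distinct xs" and "set xs = {1..n}"
  shows "long_cycle {1..n+1} (stransp_prod xs)"
  using assms
proof (induct n arbitrary: xs)
  case 0
  then show ?case by (auto simp: long_cycle_def intro!: exI[of _ "[1]"])
next
  case (Suc n)
  have "Suc n \<in> set xs"
    using Suc.prems(2) by simp
  then obtain ys zs where xs: "xs = ys @ Suc n # zs"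
    by (meson split_list)
  have "set (zs @ ys) = set xs - {Suc n}"
    using Suc.prems(1) unfolding xs by auto
  also have "\<dots> = {1..n}"
    unfolding Suc.prems(2) by auto
  finally have "long_cycle {1..n+1} (stransp_prod (zs @ ys))"
    using Suc.prems(1) unfolding xs by (intro Suc.hyps) auto
  then have "long_cycle (insert (Suc (Suc n)) {1..n+1})
      (stransp (Suc n) \<circ> stransp_prod (zs @ ys))"
    unfolding stransp_eq_transpose[of "Suc n"] by (intro long_cycle_transpose_insert) auto
  moreover have "insert (Suc (Suc n)) {1..n+1} = {1..Suc n + 1}"
    by auto
  ultimately have inner: "long_cycle {1..Suc n + 1} (stransp_prod (Suc n # zs @ ys))"
    by simp
  define g where "g = stransp_prod ys"
  have g: "g permutes {1..Suc n + 1}"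
    using Suc.prems unfolding xs g_def by (intro stransp_prod_permutes) auto
  have "stransp_prod (Suc n # zs @ ys) = stransp_prod (Suc n # zs) \<circ> g"
    unfolding g_def by (metis append_Cons stransp_prod_append)
  then have "stransp_prod xs = g \<circ> stransp_prod (Suc n # zs @ ys) \<circ> inv g"
    using permutes_inv_o(1)[OF g] unfolding xs stransp_prod_append g_def[symmetric]
    by (simp add: comp_assoc)
  then show ?case
    using long_cycle_conj[OF inner permutes_bij[OF g]] permutes_image[OF g] by metis
qed

lemma coxeter_long_cycle: "coxeter n c \<Longrightarrow> long_cycle {1..n+1} c"
  unfolding coxeter_def using stransp_prod_long_cycle by blast

lemma cycle_of_list_funpow_hd:
  assumes "distinct cs" and "cs \<noteq> []"
  shows "(cycle_of_list cs ^^ k) (hd cs) = cs ! (k mod length cs)"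
proof -
  have "map (cycle_of_list cs ^^ k) cs ! 0 = rotate k cs ! 0"
    using cyclic_rotation[OF assms(1)] by simp
  then show ?thesis
    using assms(2) by (simp add: nth_rotate hd_conv_nth)
qed

lemma long_cycle_split:
  fixes n :: nat
  assumes "long_cycle {1..n+1} c" and "1 \<le> n"
  obtains as bs where "distinct (1 # as @ (n+1) # bs)" "set (1 # as @ (n+1) # bs) = {1..n+1}"
    "c = cycle_of_list (1 # as @ (n+1) # bs)"
proof -
  obtain cs where cs: "distinct (1 # cs)" "set (1 # cs) = {1..n+1}" "c = cycle_of_list (1 # cs)"
    using long_cycle_starting_at[OF assms(1), of 1] by auto
  have "n+1 \<in> set (1 # cs)"
    using cs(2) by simp
  then have "n+1 \<in> set cs"
    using assms(2) by simp
  then obtain as bs where "cs = as @ (n+1) # bs"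
    by (meson split_list)
  with cs show thesis
    by (intro that) simp_all
qed

lemma set_eq_nth_append_middle:
  "{(xs @ ys @ zs) ! k | k. length xs \<le> k \<and> k < length xs + length ys} = set ys" (is "?M = _")
proof
  show "?M \<subseteq> set ys"
  proof (rule subsetI, elim CollectE exE conjE)
    fix y k
    assume y: "y = (xs @ ys @ zs) ! k" and "length xs \<le> k" "k < length xs + length ys"
    then obtain i where "k = length xs + i" "i < length ys"
      by (metis add_less_cancel_left le_iff_add)
    then show "y \<in> set ys"
      using y by (simp add: nth_append)
  qed
  show "set ys \<subseteq> ?M"
  proof
    fix y
    assume "y \<in> set ys"
    then obtain i where "i < length ys" "y = ys ! i"
      by (auto simp: in_set_conv_nth)
    then show "y \<in> ?M"
      by (intro CollectI exI[of _ "length xs + i"]) (simp add: nth_append)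
  qed
qed

context
  fixes n :: nat and as bs :: "nat list"
  assumes distinct: "distinct (1 # as @ (n+1) # bs)"
    and length: "length (1 # as @ (n+1) # bs) = n+1"
begin

private abbreviation "cs \<equiv> 1 # as @ (n+1) # bs"

private lemma length_as: "length as < n"
  using length by simp

private lemma orbit: "k \<le> n \<Longrightarrow> (cycle_of_list cs ^^ k) 1 = cs ! k"
  using cycle_of_list_funpow_hd[OF distinct, of k] length by simp

lemma cyc_pos_cycle_of_list: "cyc_pos n (cycle_of_list cs) = Suc (length as)"
  unfolding cyc_pos_def
proof (rule Least_equality)
  have "(cycle_of_list cs ^^ Suc (length as)) 1 = cs ! Suc (length as)"
    using length_as by (intro orbit) simp
  then show "(cycle_of_list cs ^^ Suc (length as)) 1 = n+1"
    by (simp add: nth_append)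
next
  fix k
  assume "(cycle_of_list cs ^^ k) 1 = n+1"
  then have "cs ! (k mod (n+1)) = cs ! Suc (length as)"
    using cycle_of_list_funpow_hd[OF distinct, of k] length by (simp add: nth_append)
  then have "k mod (n+1) = Suc (length as)"
    using nth_eq_iff_index_eq[OF distinct, of "k mod (n+1)" "Suc (length as)"] length by simp
  then show "Suc (length as) \<le> k"
    by (metis mod_less_eq_dividend)
qed

lemma Lc_cycle_of_list: "Lc n (cycle_of_list cs) = set as"
proof -
  have "Lc n (cycle_of_list cs) = {cs ! k | k. 0 < k \<and> k < Suc (length as)}"
    unfolding Lc_def cyc_pos_cycle_of_list setcompr_eq_image
    by (intro image_cong refl orbit) (use length_as in auto)
  also have "\<dots> = set as"
    using set_eq_nth_append_middle[of "[1]" as "(n+1) # bs"] by (simp add: Suc_le_eq)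
  finally show ?thesis .
qed

lemma Rc_cycle_of_list: "Rc n (cycle_of_list cs) = set bs"
proof -
  have "Rc n (cycle_of_list cs) = {cs ! k | k. Suc (length as) < k \<and> k \<le> n}"
    unfolding Rc_def cyc_pos_cycle_of_list setcompr_eq_image
    by (intro image_cong refl orbit) auto
  also have "\<dots> = set bs"
    using set_eq_nth_append_middle[of "1 # as @ [n+1]" bs "[]"] length
    by (simp add: Suc_le_eq less_Suc_eq_le)
  finally show ?thesis .
qed

end

lemma w0_w0 [simp]: "w0 n (w0 n x) = x"
  by (auto simp: w0_def)

lemma w0_Suc_0 [simp]: "w0 n (Suc 0) = Suc n" and w0_Suc [simp]: "w0 n (Suc n) = Suc 0"
  by (auto simp: w0_def)

lemma bij_w0: "bij (w0 n)"
  by (rule o_bij[of "w0 n"]) (auto simp: fun_eq_iff)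

lemma mem_w0_image_iff: "x \<in> w0 n ` A \<longleftrightarrow> w0 n x \<in> A"
  by (metis image_iff w0_w0)

lemma rev_cox_cycle_of_list:
  assumes "distinct (1 # as @ (n+1) # bs)"
  shows "distinct (1 # map (w0 n) bs @ (n+1) # map (w0 n) as)"
    and "rev_cox n (cycle_of_list (1 # as @ (n+1) # bs))
           = cycle_of_list (1 # map (w0 n) bs @ (n+1) # map (w0 n) as)"
proof -
  let ?ws = "((n+1) # map (w0 n) as) @ 1 # map (w0 n) bs"
  have "distinct (map (w0 n) (1 # as @ (n+1) # bs))"
    using assms bij_is_inj[OF bij_w0, of n]
    by (simp only: distinct_map) (metis inj_on_subset subset_UNIV)
  then have distinct: "distinct ?ws"
    by simp
  have rotate: "rotate (Suc (length as)) ?ws = 1 # map (w0 n) bs @ (n+1) # map (w0 n) as"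
    using rotate_append[of "(n+1) # map (w0 n) as"] by simp
  show "distinct (1 # map (w0 n) bs @ (n+1) # map (w0 n) as)"
    using distinct unfolding rotate[symmetric] distinct_rotate .
  have "rev_cox n (cycle_of_list (1 # as @ (n+1) # bs)) = cycle_of_list ?ws"
    using conjugation_of_cycle[OF assms bij_w0] unfolding rev_cox_def by simp
  also have "\<dots> = cycle_of_list (rotate (Suc (length as)) ?ws)"
    using cycle_of_list_rotate_independent[OF distinct] .
  finally show "rev_cox n (cycle_of_list (1 # as @ (n+1) # bs))
           = cycle_of_list (1 # map (w0 n) bs @ (n+1) # map (w0 n) as)"
    unfolding rotate .
qed

definition Lset :: "nat \<Rightarrow> (nat \<Rightarrow> nat) \<Rightarrow> nat set" where
  "Lset n c = Lc n c \<union> {1}"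

definition Rset :: "nat \<Rightarrow> (nat \<Rightarrow> nat) \<Rightarrow> nat set" where
  "Rset n c = Rc n c \<union> {n+1}"

lemma
  assumes "1 \<le> n" and "coxeter n c"
  shows Lset_rev_cox: "Lset n (rev_cox n c) = w0 n ` Rset n c"
    and Rset_rev_cox: "Rset n (rev_cox n c) = w0 n ` Lset n c"
proof -
  obtain as bs where distinct: "distinct (1 # as @ (n+1) # bs)"
      and set: "set (1 # as @ (n+1) # bs) = {1..n+1}"
      and c: "c = cycle_of_list (1 # as @ (n+1) # bs)"
    using long_cycle_split[OF coxeter_long_cycle[OF assms(2)] assms(1)] by blast
  have length: "length (1 # as @ (n+1) # bs) = n+1"
    using distinct_card[OF distinct] set by simp
  note rev = rev_cox_cycle_of_list[OF distinct]
  have length_rev: "length (1 # map (w0 n) bs @ (n+1) # map (w0 n) as) = n+1"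
    using length by simp
  show "Lset n (rev_cox n c) = w0 n ` Rset n c" "Rset n (rev_cox n c) = w0 n ` Lset n c"
    unfolding Lset_def Rset_def c rev(2) Lc_cycle_of_list[OF rev(1) length_rev]
      Rc_cycle_of_list[OF rev(1) length_rev] Lc_cycle_of_list[OF distinct length]
      Rc_cycle_of_list[OF distinct length]
    by auto
qed

text \<open>\<open>l\<close> (resp. \<open>r\<close>) says whether the left (resp. right) sign is \<open>\<boxminus>\<close>, so \<open>st_pp\<close>,
  \<open>st_pm\<close>, \<open>st_mp\<close> and \<open>st_mm\<close> are its four instances.\<close>

definition storable_at ::
    "bool \<Rightarrow> bool \<Rightarrow> (nat \<Rightarrow> nat) \<Rightarrow> (nat \<Rightarrow> nat) \<Rightarrow> (nat \<Rightarrow> nat) \<Rightarrow> bool" where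
  "storable_at l r la mu nu \<longleftrightarrow>
     (if l then storable mu la else storable la mu) \<and>
     (if r then storable mu nu else storable nu mu)"

lemma storable_at_swap: "storable_at l r la mu nu \<longleftrightarrow> storable_at r l nu mu la"
  unfolding storable_at_def by blast

lemma shift_down_iff: "1 \<le> i \<Longrightarrow> i \<in> shift_down A \<longleftrightarrow> Suc i \<in> A"
  unfolding shift_down_def by (auto simp: image_iff intro!: bexI[of _ "Suc i"])

lemma finite_Lc: "finite (Lc n c)"
  unfolding Lc_def by (rule finite_subset[of _ "(\<lambda>k. (c ^^ k) 1) ` {..<cyc_pos n c}"]) auto

lemma finite_Rc: "finite (Rc n c)"
  unfolding Rc_def by (rule finite_subset[of _ "(\<lambda>k. (c ^^ k) 1) ` {..n}"]) auto

text \<open>Since \<open>1 \<in> L\<close> and \<open>n+1 \<in> R\<close>, the support condition in \<open>c_storable\<close> is vacuous.\<close>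

lemma c_storable_iff:
  "c_storable n c pi \<longleftrightarrow> (\<forall>i\<in>{1..n}. is_partition (pi i) \<and>
     storable_at (i \<in> Lset n c) (i \<in> shift_down (Rset n c))
       (ext_tuple n pi (i - 1)) (ext_tuple n pi i) (ext_tuple n pi (Suc i)))"
proof -
  have "Min (Lset n c) \<le> 1" and "n+1 \<le> Max (Rset n c)"
    unfolding Lset_def Rset_def by (simp_all add: finite_Lc finite_Rc)
  then show ?thesis
    unfolding c_storable_def Let_def Lset_def[symmetric] Rset_def[symmetric]
    by (auto simp: storable_at_def st_pp_def st_pm_def st_mp_def st_mm_def)
qed

lemma
  assumes "1 \<le> n" and "coxeter n c" and "i \<in> {1..n}"
  shows mem_Lset_rev_cox: "i \<in> Lset n (rev_cox n c) \<longleftrightarrow> n+1-i \<in> shift_down (Rset n c)"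
    and mem_shift_down_Rset_rev_cox:
      "i \<in> shift_down (Rset n (rev_cox n c)) \<longleftrightarrow> n+1-i \<in> Lset n c"
proof -
  have "w0 n i = Suc (n+1-i)" and "w0 n (Suc i) = n+1-i" and "1 \<le> n+1-i"
    using assms(3) by (auto simp: w0_def)
  then show "i \<in> Lset n (rev_cox n c) \<longleftrightarrow> n+1-i \<in> shift_down (Rset n c)"
    and "i \<in> shift_down (Rset n (rev_cox n c)) \<longleftrightarrow> n+1-i \<in> Lset n c"
    using assms(3) by (simp_all add: Lset_rev_cox[OF assms(1,2)] Rset_rev_cox[OF assms(1,2)]
        mem_w0_image_iff shift_down_iff)
qed

lemma ext_tuple_rev_tuple:
  "k \<le> n+1 \<Longrightarrow> ext_tuple n (rev_tuple n pi) k = ext_tuple n pi (n+1-k)"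
  by (auto simp: ext_tuple_def rev_tuple_def)

theorem lemma4p9:
  fixes n :: nat and c :: "nat \<Rightarrow> nat" and pi :: "nat \<Rightarrow> nat \<Rightarrow> nat"
  assumes "n \<ge> 1" and "coxeter n c" and "c_storable n c pi"
  shows "c_storable n (rev_cox n c) (rev_tuple n pi)"
  unfolding c_storable_iff
proof
  fix i
  assume i: "i \<in> {1..n}"
  define j where "j = n+1-i"
  have j: "j \<in> {1..n}"
    using i by (auto simp: j_def)
  have "is_partition (pi j) \<and> storable_at (j \<in> Lset n c) (j \<in> shift_down (Rset n c))
      (ext_tuple n pi (j - 1)) (ext_tuple n pi j) (ext_tuple n pi (Suc j))"
    using assms(3) j unfolding c_storable_iff by blast
  moreover have "ext_tuple n (rev_tuple n pi) (i - 1) = ext_tuple n pi (Suc j)"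
    and "ext_tuple n (rev_tuple n pi) i = ext_tuple n pi j"
    and "ext_tuple n (rev_tuple n pi) (Suc i) = ext_tuple n pi (j - 1)"
    using i by (auto simp: ext_tuple_rev_tuple j_def Suc_diff_le)
  ultimately show "is_partition (rev_tuple n pi i) \<and>
     storable_at (i \<in> Lset n (rev_cox n c)) (i \<in> shift_down (Rset n (rev_cox n c)))
       (ext_tuple n (rev_tuple n pi) (i - 1)) (ext_tuple n (rev_tuple n pi) i)
       (ext_tuple n (rev_tuple n pi) (Suc i))"
    using storable_at_swap mem_Lset_rev_cox[OF assms(1,2) i]
      mem_shift_down_Rset_rev_cox[OF assms(1,2) i]
    by (simp add: rev_tuple_def j_def)
qed

end
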